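(* Under the standing assumptions, the set $\mathcal{D}(V)$ is convex and the value function $V$ is concave on $\mathcal{D}(V)$.
   Context: Fix $T>0$, $r>0$, $\rho>0$. $L^2_{-T}:=L^2([-T,0];\mathbb{R})$, $W^{1,2}_{-T}:=W^{1,2}([-T,0];\mathbb{R})$, $H:=\mathbb{R}\times L^2_{-T}$ with elements $\eta=(\eta_0,\eta_1)$, $H_+:=(0,+\infty)\times L^2_{-T}$. Standing assumptions: $a\in W^{1,2}_{-T}$, $a\ge0$, $a(-T)=0$; $f_0:[0,\infty)\times\mathbb{R}\to\mathbb{R}$ jointly concave, nondecreasing in its second variable, Lipschitz with constant $C_{f_0}$, $f_0(0,y)>0$ for all $y>0$, extended to $\mathbb{R}^2$ by $f_0(x,y):=f_0(0,y)$ for $x<0$; $U_1\in C([0,\infty))\cap C^2((0,\infty))$ with $U_1'>0$, $U_1'(0^+)=+\infty$, $U_1''<0$, $U_1$ bounded; $U_2\in C((0,\infty))$ increasing, concave, bounded above, with $\int_0^\infty e^{-\rho t}U_2(e^{-C_{f_0}t})dt>-\infty$. For $\eta\in H_+$ and $c\in L^1_{loc}([0,\infty);[0,\infty))$, $x(\cdot;\eta,c)$ is the unique function $x:[-T,\infty)\to\mathbb{R}$, continuous on $[0,\infty)$, with $x=\eta_1$ a.e. on $[-T,0)$ and $x(t)=\eta_0+\int_0^t[r x(s)+f_0(x(s),\int_{-T}^0a(\xi)x(s+\xi)d\xi)-c(s)]ds$ for $t\ge 0$. Admissible controls: $\mathcal{C}(\eta):=\{c\in L^1_{loc}([0,\infty);[0,\infty))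 : x(t;\eta,c)>0\ \forall t\ge0\}$. Objective $J(\eta;c):=\int_0^\infty e^{-\rho t}[U_1(c(t))+U_2(x(t;\eta,c))]dt$, value function $V(\eta):=\sup_{c\in\mathcal{C}(\eta)}J(\eta;c)$ (with $\sup\emptyset=-\infty$), and $\mathcal{D}(V):=\{\eta\in H_+: V(\eta)>-\infty\}$. *)

theory Defs
  imports "HOL-Analysis.Analysis"
begin

text \<open>Elements of H = R x L2([-T,0]) are represented as pairs (eta0, eta1) with
  eta1 a real function which is square integrable on [-T,0].\<close>

definition L2_on :: "real \<Rightarrow> (real \<Rightarrow> real) \<Rightarrow> bool" where
  "L2_on T g \<longleftrightarrow> set_borel_measurable lborel {-T..0} g
      \<and> set_integrable lborel {-T..0} (\<lambda>s. (g s)\<^sup>2)"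

definition W12_on :: "real \<Rightarrow> (real \<Rightarrow> real) \<Rightarrow> bool" where
  "W12_on T a \<longleftrightarrow> (\<exists>a'. L2_on T a' \<and>
      (\<forall>\<xi>\<in>{-T..0}. a \<xi> = a (-T) + (LINT s:{-T..\<xi>}|lborel. a' s)))"

definition H_plus :: "real \<Rightarrow> (real \<times> (real \<Rightarrow> real)) set" where
  "H_plus T = {\<eta>. fst \<eta> > 0 \<and> L2_on T (snd \<eta>)}"

definition comb :: "real \<Rightarrow> real \<times> (real \<Rightarrow> real) \<Rightarrow> real \<times> (real \<Rightarrow> real) \<Rightarrow> real \<times> (real \<Rightarrow> real)" where
  "comb l \<eta> \<eta>' = (l * fst \<eta> + (1 - l) * fst \<eta>', \<lambda>s. l * snd \<eta> s + (1 - l) * snd \<eta>' s)"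

definition control :: "(real \<Rightarrow> real) \<Rightarrow> bool" where
  "control c \<longleftrightarrow> (\<forall>t\<ge>0. c t \<ge> 0) \<and> (\<forall>t\<ge>0. set_integrable lborel {0..t} c)"

text \<open>x solves the state equation with initial datum eta and control c
  (the representative is fixed by x = eta1 on t < 0).\<close>
definition is_state :: "real \<Rightarrow> real \<Rightarrow> (real \<Rightarrow> real) \<Rightarrow> (real \<Rightarrow> real \<Rightarrow> real)
    \<Rightarrow> real \<times> (real \<Rightarrow> real) \<Rightarrow> (real \<Rightarrow> real) \<Rightarrow> (real \<Rightarrow> real) \<Rightarrow> bool" where
  "is_state T r a f0 \<eta> c x \<longleftrightarrow>
     (\<forall>t<0. x t = snd \<eta> t) \<and> continuous_on {0..} x \<and>
     (\<forall>t\<ge>0.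
        set_integrable lborel {0..t}
          (\<lambda>s. r * x s + f0 (x s) (LINT \<xi>:{-T..0}|lborel. a \<xi> * x (s + \<xi>)) - c s) \<and>
        x t = fst \<eta> + (LINT s:{0..t}|lborel.
           r * x s + f0 (x s) (LINT \<xi>:{-T..0}|lborel. a \<xi> * x (s + \<xi>)) - c s))"

definition state :: "real \<Rightarrow> real \<Rightarrow> (real \<Rightarrow> real) \<Rightarrow> (real \<Rightarrow> real \<Rightarrow> real)
    \<Rightarrow> real \<times> (real \<Rightarrow> real) \<Rightarrow> (real \<Rightarrow> real) \<Rightarrow> (real \<Rightarrow> real)" where
  "state T r a f0 \<eta> c = (THE x. is_state T r a f0 \<eta> c x)"

definition admissible :: "real \<Rightarrow> real \<Rightarrow> (real \<Rightarrow> real) \<Rightarrow> (real \<Rightarrow> real \<Rightarrow> real)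
    \<Rightarrow> real \<times> (real \<Rightarrow> real) \<Rightarrow> (real \<Rightarrow> real) set" where
  "admissible T r a f0 \<eta> = {c. control c \<and> is_state T r a f0 \<eta> c (state T r a f0 \<eta> c)
        \<and> (\<forall>t\<ge>0. state T r a f0 \<eta> c t > 0)}"

definition objective :: "real \<Rightarrow> (real \<Rightarrow> real) \<Rightarrow> (real \<Rightarrow> real) \<Rightarrow> (real \<Rightarrow> real) \<Rightarrow> (real \<Rightarrow> real) \<Rightarrow> ereal" where
  "objective \<rho> U1 U2 c x =
     enn2ereal (\<integral>\<^sup>+ t. ennreal (indicator {0..} t * (exp (-\<rho> * t) * (U1 (c t) + U2 (x t)))) \<partial>lborel)
   - enn2ereal (\<integral>\<^sup>+ t. ennreal (- (indicator {0..} t * (exp (-\<rho> * t) * (U1 (c t) + U2 (x t))))) \<partial>lborel)"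

definition J :: "real \<Rightarrow> real \<Rightarrow> real \<Rightarrow> (real \<Rightarrow> real) \<Rightarrow> (real \<Rightarrow> real \<Rightarrow> real)
    \<Rightarrow> (real \<Rightarrow> real) \<Rightarrow> (real \<Rightarrow> real) \<Rightarrow> real \<times> (real \<Rightarrow> real) \<Rightarrow> (real \<Rightarrow> real) \<Rightarrow> ereal" where
  "J T r \<rho> a f0 U1 U2 \<eta> c = objective \<rho> U1 U2 c (state T r a f0 \<eta> c)"

definition V :: "real \<Rightarrow> real \<Rightarrow> real \<Rightarrow> (real \<Rightarrow> real) \<Rightarrow> (real \<Rightarrow> real \<Rightarrow> real)
    \<Rightarrow> (real \<Rightarrow> real) \<Rightarrow> (real \<Rightarrow> real) \<Rightarrow> real \<times> (real \<Rightarrow> real) \<Rightarrow> ereal" where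
  "V T r \<rho> a f0 U1 U2 \<eta> = Sup (J T r \<rho> a f0 U1 U2 \<eta> ` admissible T r a f0 \<eta>)"

definition domV :: "real \<Rightarrow> real \<Rightarrow> real \<Rightarrow> (real \<Rightarrow> real) \<Rightarrow> (real \<Rightarrow> real \<Rightarrow> real)
    \<Rightarrow> (real \<Rightarrow> real) \<Rightarrow> (real \<Rightarrow> real) \<Rightarrow> (real \<times> (real \<Rightarrow> real)) set" where
  "domV T r \<rho> a f0 U1 U2 = {\<eta> \<in> H_plus T. V T r \<rho> a f0 U1 U2 \<eta> > -\<infinity>}"

end

theory Submission
  imports Defs
begin

text \<open>
  The proof is the classical one: given initial data \<open>\<eta>, \<eta>'\<close> with admissible controls
  \<open>c, c'\<close> and states \<open>x, x'\<close>, the convex combination \<open>x\<^sub>\<lambda> = \<lambda> x + (1-\<lambda>) x'\<close> is again a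
  state, started at the combined datum and driven by the control
  \<open>c\<^sub>\<lambda> = \<lambda> c + (1-\<lambda>) c' + (f\<^sub>0(x\<^sub>\<lambda>, D x\<^sub>\<lambda>) - \<lambda> f\<^sub>0(x, D x) - (1-\<lambda>) f\<^sub>0(x', D x'))\<close>,
  where \<open>D\<close> is the (linear) delay term.  Concavity of \<open>f\<^sub>0\<close> gives \<open>c\<^sub>\<lambda> \<ge> \<lambda> c + (1-\<lambda>) c'\<close>,
  so \<open>c\<^sub>\<lambda>\<close> is admissible, and monotonicity and concavity of the utilities give
  \<open>\<lambda> J(\<eta>;c) + (1-\<lambda>) J(\<eta>';c') \<le> J(\<eta>\<^sub>\<lambda>;c\<^sub>\<lambda>)\<close>.  Taking suprema yields concavity of \<open>V\<close>,
  and convexity of \<open>\<D>(V)\<close> follows since the combined value is then finite from below.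
\<close>

subsection \<open>Square-integrable histories and the data of the problem\<close>

lemma L2_on_integrable:
  assumes "L2_on T g" shows "set_integrable lborel {-T..0} g"
proof -
  have meas: "set_borel_measurable lborel {-T..0} g"
    and sq: "set_integrable lborel {-T..0} (\<lambda>s. (g s)\<^sup>2)"
    using assms by (auto simp: L2_on_def)
  have one: "set_integrable lborel {-T..0} (\<lambda>s. 1::real)"
    by (rule borel_integrable_atLeastAtMost') (auto intro: continuous_intros)
  have "\<bar>v\<bar> \<le> 1 + v\<^sup>2" for v :: real
  proof (cases "\<bar>v\<bar> \<le> 1")
    case False
    then have "\<bar>v\<bar> * 1 \<le> \<bar>v\<bar> * \<bar>v\<bar>" by (intro mult_left_mono) auto
    then show ?thesis by (simp add: power2_eq_square abs_mult_self_eq)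
  qed (simp add: add_increasing2)
  then show ?thesis
    by (intro set_integrable_bound[OF set_integral_add(1)[OF one sq] meas]) auto
qed

text \<open>Convex combinations of square-integrable histories are square integrable; the
  pointwise bound is \<open>(\<lambda>g + (1-\<lambda>)h)\<^sup>2 \<le> g\<^sup>2 + h\<^sup>2\<close>.\<close>
lemma L2_on_convex_comb:
  assumes g: "L2_on T g" and h: "L2_on T h" and l: "0 \<le> l" "l \<le> 1"
  shows "L2_on T (\<lambda>s. l * g s + (1 - l) * h s)"
proof -
  let ?w = "\<lambda>s. l * g s + (1 - l) * h s"
  have mg: "(\<lambda>s. indicator {-T..0} s *\<^sub>R g s) \<in> borel_measurable lborel"
    and mh: "(\<lambda>s. indicator {-T..0} s *\<^sub>R h s) \<in> borel_measurable lborel"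
    and ig: "set_integrable lborel {-T..0} (\<lambda>s. (g s)\<^sup>2)"
    and ih: "set_integrable lborel {-T..0} (\<lambda>s. (h s)\<^sup>2)"
    using g h by (auto simp: L2_on_def set_borel_measurable_def)
  have "(\<lambda>s. l * (indicator {-T..0} s *\<^sub>R g s) + (1 - l) * (indicator {-T..0} s *\<^sub>R h s))
      \<in> borel_measurable lborel"
    using mg mh by (intro borel_measurable_add borel_measurable_times) auto
  moreover have "(\<lambda>s. l * (indicator {-T..0} s *\<^sub>R g s) + (1 - l) * (indicator {-T..0} s *\<^sub>R h s))
      = (\<lambda>s. indicator {-T..0} s *\<^sub>R ?w s)"
    by (auto simp: fun_eq_iff split: split_indicator)
  ultimately have mw: "set_borel_measurable lborel {-T..0} ?w"
    unfolding set_borel_measurable_def by simp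
  have "(\<lambda>s. (indicator {-T..0} s *\<^sub>R ?w s) * (indicator {-T..0} s *\<^sub>R ?w s))
      \<in> borel_measurable lborel"
    using mw mw unfolding set_borel_measurable_def by (rule borel_measurable_times)
  moreover have "(\<lambda>s. (indicator {-T..0} s *\<^sub>R ?w s) * (indicator {-T..0} s *\<^sub>R ?w s))
      = (\<lambda>s. indicator {-T..0} s *\<^sub>R (?w s)\<^sup>2)"
    by (auto simp: fun_eq_iff power2_eq_square split: split_indicator)
  ultimately have msq: "set_borel_measurable lborel {-T..0} (\<lambda>s. (?w s)\<^sup>2)"
    unfolding set_borel_measurable_def by simp
  have "(?w s)\<^sup>2 \<le> (g s)\<^sup>2 + (h s)\<^sup>2" for s
  proof -
    have id: "(?w s)\<^sup>2 = l * (g s)\<^sup>2 + (1 - l) * (h s)\<^sup>2 - l * (1 - l) * (g s - h s)\<^sup>2"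
      by (simp add: power2_eq_square algebra_simps)
    have "l * (g s)\<^sup>2 \<le> (g s)\<^sup>2" "(1 - l) * (h s)\<^sup>2 \<le> (h s)\<^sup>2"
      using l by (simp_all add: mult_left_le_one_le)
    moreover have "0 \<le> l * (1 - l) * (g s - h s)\<^sup>2" using l by simp
    ultimately show ?thesis unfolding id by linarith
  qed
  then have "set_integrable lborel {-T..0} (\<lambda>s. (?w s)\<^sup>2)"
    by (intro set_integrable_bound[OF set_integral_add(1)[OF ig ih] msq]) auto
  with mw show ?thesis unfolding L2_on_def by simp
qed

lemma comb_in_H_plus:
  assumes "\<eta> \<in> H_plus T" "\<eta>' \<in> H_plus T" "0 \<le> l" "l \<le> 1"
  shows "comb l \<eta> \<eta>' \<in> H_plus T"
proof -
  have "0 < l * fst \<eta> + (1 - l) * fst \<eta>'"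
    using assms by (cases "l = 0") (auto simp: H_plus_def intro: add_pos_nonneg)
  then show ?thesis
    using assms L2_on_convex_comb[of T "snd \<eta>" "snd \<eta>'" l] by (simp add: H_plus_def comb_def)
qed

text \<open>A \<open>W\<^sup>1\<^sup>,\<^sup>2\<close> kernel is an indefinite integral of an integrable function, hence continuous;
  in particular it is measurable and bounded on \<open>[-T,0]\<close>.\<close>
lemma W12_on_continuous:
  assumes "W12_on T a" shows "continuous_on {-T..0} a"
proof -
  obtain a' where L: "L2_on T a'"
    and a_eq: "\<forall>\<xi>\<in>{-T..0}. a \<xi> = a (-T) + (LINT s:{-T..\<xi>}|lborel. a' s)"
    using assms by (auto simp: W12_on_def)
  have int: "set_integrable lborel {-T..0} a'" using L by (rule L2_on_integrable)
  have "set_integrable lborel {-T..\<xi>} a'" if "\<xi> \<in> {-T..0}" for \<xi>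
    by (rule set_integrable_subset[OF int]) (use that in auto)
  then have eq: "a (-T) + integral {-T..\<xi>} a' = a \<xi>" if "\<xi> \<in> {-T..0}" for \<xi>
    using a_eq that set_borel_integral_eq_integral(2) by metis
  have "continuous_on {-T..0} (\<lambda>\<xi>. a (-T) + integral {-T..\<xi>} a')"
    using indefinite_integral_continuous_1[OF set_borel_integral_eq_integral(1)[OF int]]
    by (intro continuous_intros)
  then show ?thesis by (rule continuous_on_eq) (rule eq)
qed

lemma W12_on_measurable_bounded:
  assumes "W12_on T a"
  shows "set_borel_measurable lborel {-T..0} a" and "\<exists>B\<ge>0. \<forall>\<xi>\<in>{-T..0}. \<bar>a \<xi>\<bar> \<le> B"
proof -
  have cont: "continuous_on {-T..0} a" using assms by (rule W12_on_continuous)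
  then show "set_borel_measurable lborel {-T..0} a"
    unfolding set_borel_measurable_def
    using borel_measurable_continuous_on_indicator[OF _ cont] by simp
  obtain B where "\<forall>\<xi>\<in>{-T..0}. norm (a \<xi>) \<le> B"
    using compact_imp_bounded[OF compact_continuous_image[OF cont compact_Icc]]
    unfolding bounded_iff by auto
  then show "\<exists>B\<ge>0. \<forall>\<xi>\<in>{-T..0}. \<bar>a \<xi>\<bar> \<le> B"
    by (intro exI[of _ "max 0 B"]) auto
qed

lemma f0_lipschitz_global:
  fixes f0 :: "real \<Rightarrow> real \<Rightarrow> real"
  assumes lip: "Cf-lipschitz_on ({0..} \<times> UNIV) (\<lambda>p. f0 (fst p) (snd p))"
    and ext: "\<forall>x<0. \<forall>y. f0 x y = f0 0 y"
  shows "\<bar>f0 u v - f0 u' v'\<bar> \<le> Cf * (\<bar>u - u'\<bar> + \<bar>v - v'\<bar>)"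
proof -
  have clip: "f0 w z = f0 (max w 0) z" for w z using ext by (cases "w < 0") auto
  have C: "Cf \<ge> 0" using lip by (rule lipschitz_on_nonneg)
  have "dist (f0 (max u 0) v) (f0 (max u' 0) v') \<le> Cf * dist (max u 0, v) (max u' 0, v')"
    using lipschitz_onD[OF lip, of "(max u 0, v)" "(max u' 0, v')"] by simp
  also have "dist (max u 0, v) (max u' 0, v') \<le> \<bar>u - u'\<bar> + \<bar>v - v'\<bar>"
  proof -
    have "dist (max u 0, v) (max u' 0, v') = sqrt ((dist (max u 0) (max u' 0))\<^sup>2 + (dist v v')\<^sup>2)"
      by (rule dist_Pair_Pair)
    also have "\<dots> \<le> \<bar>dist (max u 0) (max u' 0)\<bar> + \<bar>dist v v'\<bar>"
      by (rule sqrt_sum_squares_le_sum_abs)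
    also have "\<dots> \<le> \<bar>u - u'\<bar> + \<bar>v - v'\<bar>" by (simp add: dist_real_def)
    finally show ?thesis .
  qed
  then have "Cf * dist (max u 0, v) (max u' 0, v') \<le> Cf * (\<bar>u - u'\<bar> + \<bar>v - v'\<bar>)"
    using C by (rule mult_left_mono)
  finally show ?thesis by (simp add: dist_real_def clip[of u v] clip[of u' v'])
qed

text \<open>A function of two variables satisfying such a bound is continuous, so its composition
  with measurable functions is measurable.\<close>
lemma measurable_lipschitz_comp:
  fixes f0 :: "real \<Rightarrow> real \<Rightarrow> real"
  assumes lip: "\<And>u v u' v'. \<bar>f0 u v - f0 u' v'\<bar> \<le> Cf * (\<bar>u - u'\<bar> + \<bar>v - v'\<bar>)"
    and P: "P \<in> borel_measurable M" and Q: "Q \<in> borel_measurable M"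
  shows "(\<lambda>s. f0 (P s) (Q s)) \<in> borel_measurable M"
proof -
  have "continuous_on UNIV (\<lambda>p. f0 (fst p) (snd p))"
  proof (rule lipschitz_on_continuous_on[of "2 * \<bar>Cf\<bar>"], rule lipschitz_onI)
    fix p q :: "real \<times> real"
    have "\<bar>fst p - fst q\<bar> \<le> dist p q" "\<bar>snd p - snd q\<bar> \<le> dist p q"
      by (metis dist_fst_le dist_real_def, metis dist_snd_le dist_real_def)
    then have "\<bar>Cf\<bar> * (\<bar>fst p - fst q\<bar> + \<bar>snd p - snd q\<bar>) \<le> \<bar>Cf\<bar> * (2 * dist p q)"
      by (intro mult_left_mono) auto
    moreover have "Cf * (\<bar>fst p - fst q\<bar> + \<bar>snd p - snd q\<bar>)
        \<le> \<bar>Cf\<bar> * (\<bar>fst p - fst q\<bar> + \<bar>snd p - snd q\<bar>)"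
      by (intro mult_right_mono) auto
    ultimately have "Cf * (\<bar>fst p - fst q\<bar> + \<bar>snd p - snd q\<bar>) \<le> \<bar>Cf\<bar> * (2 * dist p q)"
      by linarith
    then show "dist (f0 (fst p) (snd p)) (f0 (fst q) (snd q)) \<le> 2 * \<bar>Cf\<bar> * dist p q"
      using lip[of "fst p" "snd p" "fst q" "snd q"] by (simp add: dist_real_def)
  qed simp
  then have "(\<lambda>p. f0 (fst p) (snd p)) \<in> borel_measurable (borel \<Otimes>\<^sub>M borel)"
    using borel_measurable_continuous_onI by (simp add: borel_prod)
  from measurable_comp[OF measurable_Pair[OF P Q] this] show ?thesis by (simp add: o_def)
qed

lemma control_measurable:
  fixes c :: "real \<Rightarrow> real"
  assumes "\<forall>t\<ge>0. set_integrable lborel {0..t} c"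
  shows "(\<lambda>t. indicator {0..} t * c t) \<in> borel_measurable borel"
proof (rule borel_measurable_LIMSEQ_real[where u="\<lambda>i t. indicator {0..real i} t * c t"])
  fix i :: nat
  have "integrable lborel (\<lambda>t. indicator {0..real i} t *\<^sub>R c t)"
    using assms unfolding set_integrable_def by auto
  then show "(\<lambda>t. indicator {0..real i} t * c t) \<in> borel_measurable borel"
    using borel_measurable_integrable by fastforce
next
  fix t :: real
  obtain N :: nat where N: "t \<le> real N" using real_arch_simple by blast
  have "\<forall>\<^sub>F i in sequentially. indicator {0..real i} t * c t = indicator {0..} t * c t"
  proof (rule eventually_sequentiallyI[of N])
    fix i assume "N \<le> i"
    then have "t \<le> real i" using N by (meson of_nat_le_iff order_trans)
    then show "indicator {0..real i} t * c t = indicator {0..} t * c t"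
      by (auto split: split_indicator)
  qed
  then show "(\<lambda>i. indicator {0..real i} t * c t) \<longlonglongrightarrow> indicator {0..} t * c t"
    by (rule tendsto_eventually)
qed


subsection \<open>Trajectories and the delay term\<close>

definition history_path :: "real \<Rightarrow> (real \<Rightarrow> real) \<Rightarrow> (real \<Rightarrow> real) \<Rightarrow> bool" where
  "history_path T g x \<longleftrightarrow> L2_on T g \<and> (\<forall>t<0. x t = g t) \<and> continuous_on {0..} x"

definition mix :: "real \<Rightarrow> (real \<Rightarrow> real) \<Rightarrow> (real \<Rightarrow> real) \<Rightarrow> real \<Rightarrow> real" where
  "mix l x y t = l * x t + (1 - l) * y t"

lemma history_path_mix:
  assumes "history_path T g x" "history_path T h y" "0 \<le> l" "l \<le> 1"
  shows "history_path T (mix l g h) (mix l x y)"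
  using assms L2_on_convex_comb[of T g h l]
  by (auto simp: history_path_def mix_def[abs_def] intro!: continuous_intros)

locale delay_kernel =
  fixes T B :: real and a :: "real \<Rightarrow> real"
  assumes T_pos: "T > 0" and B_nonneg: "B \<ge> 0"
    and a_meas: "set_borel_measurable lborel {-T..0} a"
    and a_bound: "\<forall>\<xi>\<in>{-T..0}. \<bar>a \<xi>\<bar> \<le> B"
begin

definition delay :: "(real \<Rightarrow> real) \<Rightarrow> real \<Rightarrow> real" where
  "delay x s = (LINT \<xi>:{-T..0}|lborel. a \<xi> * x (s + \<xi>))"

lemma path_integrable:
  assumes x: "history_path T g x" and t: "t \<ge> 0"
  shows "set_integrable lborel {-T..t} x"
proof -
  have x_g: "\<forall>t<0. x t = g t" and x_cont: "continuous_on {0..} x"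
    and g_int: "set_integrable lborel {-T..0} g"
    using x L2_on_integrable by (auto simp: history_path_def)
  have "set_integrable lborel {-T..<0} g" by (rule set_integrable_subset[OF g_int]) auto
  moreover have "set_integrable lborel {-T..<0} x = set_integrable lborel {-T..<0} g"
    by (rule set_integrable_cong) (auto simp: x_g)
  ultimately have past: "set_integrable lborel {-T..<0} x" by simp
  have future: "set_integrable lborel {0..t} x"
    by (rule borel_integrable_atLeastAtMost', rule continuous_on_subset[OF x_cont]) auto
  have "set_integrable lborel ({-T..<0} \<union> {0..t}) x"
    by (rule set_integrable_Un[OF past future]) auto
  moreover have "{-T..<0} \<union> {0..t} = {-T..t}" using T_pos t by auto
  ultimately show ?thesis by simp
qed

lemma window_integrable:
  assumes x: "history_path T g x" and s: "0 \<le> s" "s \<le> t"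
  shows "set_integrable lborel {-T..0} (\<lambda>\<xi>. x (s + \<xi>))"
    and "(LINT \<xi>:{-T..0}|lborel. \<bar>x (s + \<xi>)\<bar>) \<le> (LINT u:{-T..t}|lborel. \<bar>x u\<bar>)"
proof -
  have xi: "set_integrable lborel {-T..t} x" using path_integrable[OF x] s by simp
  have shifted: "integrable lborel (\<lambda>\<xi>. indicator {-T..t} (s + 1 * \<xi>) *\<^sub>R x (s + 1 * \<xi>))"
    using xi unfolding set_integrable_def by (intro lborel_integrable_real_affine) auto
  have shifted_abs: "integrable lborel (\<lambda>\<xi>. indicator {-T..t} (s + 1 * \<xi>) *\<^sub>R \<bar>x (s + 1 * \<xi>)\<bar>)"
    using set_integrable_abs[OF xi] unfolding set_integrable_def
    by (intro lborel_integrable_real_affine) auto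
  have "integrable lborel (\<lambda>\<xi>. indicator {-T..0} \<xi> *\<^sub>R (indicator {-T..t} (s + 1 * \<xi>) *\<^sub>R x (s + 1 * \<xi>)))"
    by (rule integrable_mult_indicator[OF _ shifted]) auto
  moreover have "(\<lambda>\<xi>. indicator {-T..0} \<xi> *\<^sub>R (indicator {-T..t} (s + 1 * \<xi>) *\<^sub>R x (s + 1 * \<xi>)))
      = (\<lambda>\<xi>. indicator {-T..0} \<xi> *\<^sub>R x (s + \<xi>))"
    using s T_pos by (auto simp: fun_eq_iff split: split_indicator)
  ultimately show win: "set_integrable lborel {-T..0} (\<lambda>\<xi>. x (s + \<xi>))"
    unfolding set_integrable_def by simp
  have "(LINT \<xi>:{-T..0}|lborel. \<bar>x (s + \<xi>)\<bar>)
      \<le> (\<integral>\<xi>. indicator {-T..t} (s + 1 * \<xi>) *\<^sub>R \<bar>x (s + 1 * \<xi>)\<bar> \<partial>lborel)"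
    unfolding set_lebesgue_integral_def
  proof (rule integral_mono[OF _ shifted_abs])
    show "integrable lborel (\<lambda>\<xi>. indicator {-T..0} \<xi> *\<^sub>R \<bar>x (s + \<xi>)\<bar>)"
      using set_integrable_abs[OF win] unfolding set_integrable_def .
  qed (use s T_pos in \<open>auto split: split_indicator\<close>)
  also have "\<dots> = (\<integral>u. indicator {-T..t} u *\<^sub>R \<bar>x u\<bar> \<partial>lborel)"
    using lborel_integral_real_affine[of 1 "\<lambda>u. indicator {-T..t} u *\<^sub>R \<bar>x u\<bar>" s] by simp
  finally show "(LINT \<xi>:{-T..0}|lborel. \<bar>x (s + \<xi>)\<bar>) \<le> (LINT u:{-T..t}|lborel. \<bar>x u\<bar>)"
    unfolding set_lebesgue_integral_def .
qed

lemma delay_integrand_integrable: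
  assumes x: "history_path T g x" and s: "0 \<le> s"
  shows "set_integrable lborel {-T..0} (\<lambda>\<xi>. a \<xi> * x (s + \<xi>))"
proof -
  have win: "set_integrable lborel {-T..0} (\<lambda>\<xi>. x (s + \<xi>))"
    using window_integrable(1)[OF x s order_refl] .
  have "(\<lambda>\<xi>. indicator {-T..0} \<xi> *\<^sub>R a \<xi> * (indicator {-T..0} \<xi> *\<^sub>R x (s + \<xi>)))
      \<in> borel_measurable lborel"
    using a_meas borel_measurable_integrable[OF win[unfolded set_integrable_def]]
    unfolding set_borel_measurable_def by (rule borel_measurable_times)
  moreover have "(\<lambda>\<xi>. indicator {-T..0} \<xi> *\<^sub>R a \<xi> * (indicator {-T..0} \<xi> *\<^sub>R x (s + \<xi>)))
      = (\<lambda>\<xi>. indicator {-T..0} \<xi> *\<^sub>R (a \<xi> * x (s + \<xi>)))"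
    by (auto simp: fun_eq_iff split: split_indicator)
  ultimately have meas: "set_borel_measurable lborel {-T..0} (\<lambda>\<xi>. a \<xi> * x (s + \<xi>))"
    unfolding set_borel_measurable_def by simp
  show ?thesis
  proof (rule set_integrable_bound[OF set_integrable_mult_right[OF win, of B] meas], intro AE_I2 impI)
    fix \<xi> :: real assume "\<xi> \<in> {-T..0}"
    then have "\<bar>a \<xi>\<bar> * \<bar>x (s + \<xi>)\<bar> \<le> B * \<bar>x (s + \<xi>)\<bar>" using a_bound by (intro mult_right_mono) auto
    then show "norm (a \<xi> * x (s + \<xi>)) \<le> norm (B * x (s + \<xi>))" using B_nonneg by (simp add: abs_mult)
  qed
qed

lemma delay_bound:
  assumes x: "history_path T g x" and s: "0 \<le> s" "s \<le> t"
  shows "\<bar>delay x s\<bar> \<le> B * (LINT u:{-T..t}|lborel. \<bar>x u\<bar>)"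
proof -
  have int: "set_integrable lborel {-T..0} (\<lambda>\<xi>. a \<xi> * x (s + \<xi>))"
    using delay_integrand_integrable[OF x s(1)] .
  have win: "set_integrable lborel {-T..0} (\<lambda>\<xi>. x (s + \<xi>))"
    using window_integrable(1)[OF x s] .
  have "\<bar>delay x s\<bar> \<le> (LINT \<xi>:{-T..0}|lborel. norm (a \<xi> * x (s + \<xi>)))"
    unfolding delay_def using set_integral_norm_bound[OF int] by simp
  also have "\<dots> \<le> (LINT \<xi>:{-T..0}|lborel. B * \<bar>x (s + \<xi>)\<bar>)"
  proof (rule set_integral_mono)
    show "set_integrable lborel {-T..0} (\<lambda>\<xi>. norm (a \<xi> * x (s + \<xi>)))"
      using set_integrable_abs[OF int] by simp
    show "set_integrable lborel {-T..0} (\<lambda>\<xi>. B * \<bar>x (s + \<xi>)\<bar>)"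
      using set_integrable_abs[OF win] by (rule set_integrable_mult_right)
    fix \<xi> :: real assume "\<xi> \<in> {-T..0}"
    then have "\<bar>a \<xi>\<bar> * \<bar>x (s + \<xi>)\<bar> \<le> B * \<bar>x (s + \<xi>)\<bar>" using a_bound by (intro mult_right_mono) auto
    then show "norm (a \<xi> * x (s + \<xi>)) \<le> B * \<bar>x (s + \<xi>)\<bar>" by (simp add: abs_mult)
  qed
  also have "\<dots> = B * (LINT \<xi>:{-T..0}|lborel. \<bar>x (s + \<xi>)\<bar>)" by simp
  also have "\<dots> \<le> B * (LINT u:{-T..t}|lborel. \<bar>x u\<bar>)"
    using window_integrable(2)[OF x s] B_nonneg by (rule mult_left_mono)
  finally show ?thesis .
qed

text \<open>The delay term of a trajectory agrees on \<open>[0,\<infinity>)\<close> with a Borel function of time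
  (a parametric integral of a jointly measurable integrand).\<close>
lemma delay_measurable:
  assumes x: "history_path T g x"
  shows "\<exists>DX \<in> borel_measurable borel. \<forall>s\<ge>0. delay x s = DX s"
proof -
  have x_g: "\<forall>t<0. x t = g t" and x_cont: "continuous_on {0..} x" and L: "L2_on T g"
    using x by (auto simp: history_path_def)
  define X where
    "X = (\<lambda>u. indicator {-T..<0} u * (indicator {-T..0} u *\<^sub>R g u) + indicator {0..} u *\<^sub>R x u)"
  have "(\<lambda>u. indicator {-T..0} u *\<^sub>R g u) \<in> borel_measurable borel"
    using L by (simp add: L2_on_def set_borel_measurable_def)
  moreover have "(\<lambda>u. indicator {0..} u *\<^sub>R x u) \<in> borel_measurable borel"
    by (rule borel_measurable_continuous_on_indicator[OF _ x_cont]) auto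
  ultimately have X_meas: "X \<in> borel_measurable borel"
    unfolding X_def by (intro borel_measurable_add borel_measurable_times) auto
  define A where "A = (\<lambda>\<xi>. indicator {-T..0} \<xi> *\<^sub>R a \<xi>)"
  have A_meas: "A \<in> borel_measurable borel" using a_meas by (simp add: A_def set_borel_measurable_def)
  have "(\<lambda>p::real\<times>real. A (snd p) * X (fst p + snd p)) \<in> borel_measurable borel"
  proof (rule borel_measurable_times)
    have "(\<lambda>p::real\<times>real. A (snd p)) \<in> borel_measurable (borel \<Otimes>\<^sub>M borel)"
      by (rule measurable_compose[OF measurable_snd A_meas])
    then show "(\<lambda>p::real\<times>real. A (snd p)) \<in> borel_measurable borel" by (simp add: borel_prod)
    have "(\<lambda>p::real\<times>real. fst p + snd p) \<in> borel_measurable borel"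
      by (intro borel_measurable_continuous_onI continuous_intros)
    from measurable_compose[OF this X_meas]
    show "(\<lambda>p::real\<times>real. X (fst p + snd p)) \<in> borel_measurable borel" by (simp add: o_def)
  qed
  then have "(\<lambda>(s, \<xi>). A \<xi> * X (s + \<xi>)) \<in> borel_measurable (lborel \<Otimes>\<^sub>M lborel)"
    by (simp add: lborel_prod case_prod_beta)
  then have "(\<lambda>s. \<integral>\<xi>. A \<xi> * X (s + \<xi>) \<partial>lborel) \<in> borel_measurable lborel"
    using lborel.borel_measurable_lebesgue_integral by simp
  moreover have "delay x s = (\<integral>\<xi>. A \<xi> * X (s + \<xi>) \<partial>lborel)" if "s \<ge> 0" for s
    unfolding delay_def set_lebesgue_integral_def
  proof (rule Bochner_Integration.integral_cong[OF refl])
    fix \<xi> :: real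
    show "indicator {-T..0} \<xi> *\<^sub>R (a \<xi> * x (s + \<xi>)) = A \<xi> * X (s + \<xi>)"
      using that x_g unfolding A_def X_def by (auto split: split_indicator)
  qed
  ultimately show ?thesis by auto
qed

lemma delay_linear:
  assumes x: "history_path T g x" and y: "history_path T h y" and s: "s \<ge> 0"
  shows "delay (\<lambda>t. l * x t + m * y t) s = l * delay x s + m * delay y s"
proof -
  have ix: "set_integrable lborel {-T..0} (\<lambda>\<xi>. l * (a \<xi> * x (s + \<xi>)))"
    using delay_integrand_integrable[OF x s] by (rule set_integrable_mult_right)
  have iy: "set_integrable lborel {-T..0} (\<lambda>\<xi>. m * (a \<xi> * y (s + \<xi>)))"
    using delay_integrand_integrable[OF y s] by (rule set_integrable_mult_right)
  show ?thesis
    using set_integral_add(2)[OF ix iy] unfolding delay_def by (simp add: algebra_simps)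
qed

lemma delay_diff_bound:
  assumes x: "history_path T g x" and y: "history_path T h y" and s: "0 \<le> s"
    and close: "\<And>u. u \<le> s \<Longrightarrow> \<bar>x u - y u\<bar> \<le> S"
  shows "\<bar>delay x s - delay y s\<bar> \<le> B * S * T"
proof -
  have ix: "set_integrable lborel {-T..0} (\<lambda>\<xi>. a \<xi> * x (s + \<xi>))"
    and iy: "set_integrable lborel {-T..0} (\<lambda>\<xi>. a \<xi> * y (s + \<xi>))"
    using delay_integrand_integrable[OF x s] delay_integrand_integrable[OF y s] .
  note idiff = set_integral_diff(1)[OF ix iy]
  have "\<bar>delay x s - delay y s\<bar>
      = \<bar>LINT \<xi>:{-T..0}|lborel. a \<xi> * x (s + \<xi>) - a \<xi> * y (s + \<xi>)\<bar>"
    unfolding delay_def using set_integral_diff(2)[OF ix iy] by simp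
  also have "\<dots> \<le> (LINT \<xi>:{-T..0}|lborel. norm (a \<xi> * x (s + \<xi>) - a \<xi> * y (s + \<xi>)))"
    using set_integral_norm_bound[OF idiff] by simp
  also have "\<dots> \<le> (LINT \<xi>:{-T..0}|lborel. B * S)"
  proof (rule set_integral_mono)
    show "set_integrable lborel {-T..0} (\<lambda>\<xi>. norm (a \<xi> * x (s + \<xi>) - a \<xi> * y (s + \<xi>)))"
      using set_integrable_abs[OF idiff] by simp
    show "set_integrable lborel {-T..0} (\<lambda>\<xi>. B * S)"
      by (rule borel_integrable_atLeastAtMost') (auto intro: continuous_intros)
    fix \<xi> :: real assume \<xi>: "\<xi> \<in> {-T..0}"
    have "\<bar>a \<xi>\<bar> * \<bar>x (s + \<xi>) - y (s + \<xi>)\<bar> \<le> B * S"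
      by (rule mult_mono) (use a_bound \<xi> close B_nonneg in auto)
    then show "norm (a \<xi> * x (s + \<xi>) - a \<xi> * y (s + \<xi>)) \<le> B * S"
      by (simp add: abs_mult right_diff_distrib[symmetric])
  qed
  also have "\<dots> = B * S * T" using T_pos by (simp add: set_integral_const)
  finally show ?thesis .
qed

end


subsection \<open>Uniqueness of the state\<close>

locale state_equation = delay_kernel +
  fixes r Cf :: real and f0 :: "real \<Rightarrow> real \<Rightarrow> real"
  assumes r_nonneg: "r \<ge> 0" and Cf_nonneg: "Cf \<ge> 0"
    and f0_lip: "\<And>u v u' v'. \<bar>f0 u v - f0 u' v'\<bar> \<le> Cf * (\<bar>u - u'\<bar> + \<bar>v - v'\<bar>)"
begin

definition drift :: "(real \<Rightarrow> real) \<Rightarrow> real \<Rightarrow> real" where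
  "drift x s = r * x s + f0 (x s) (delay x s)"

lemma is_state_iff:
  "is_state T r a f0 \<eta> c x \<longleftrightarrow> (\<forall>t<0. x t = snd \<eta> t) \<and> continuous_on {0..} x \<and>
     (\<forall>t\<ge>0. set_integrable lborel {0..t} (\<lambda>s. drift x s - c s) \<and>
        x t = fst \<eta> + (LINT s:{0..t}|lborel. drift x s - c s))"
  by (simp add: is_state_def drift_def delay_def)

lemma state_history_path:
  assumes "L2_on T (snd \<eta>)" "is_state T r a f0 \<eta> c x"
  shows "history_path T (snd \<eta>) x"
  using assms unfolding history_path_def is_state_iff by blast

text \<open>A Lipschitz constant of the drift with respect to the sup-distance of the past.\<close>
definition drift_lip :: real where
  "drift_lip = r + Cf + Cf * B * T"

lemma drift_lip_nonneg: "drift_lip \<ge> 0"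
  using r_nonneg Cf_nonneg B_nonneg T_pos by (simp add: drift_lip_def)

lemma drift_diff_bound:
  assumes x: "history_path T g x" and y: "history_path T h y" and s: "0 \<le> s"
    and close: "\<And>u. u \<le> s \<Longrightarrow> \<bar>x u - y u\<bar> \<le> S"
  shows "\<bar>drift x s - drift y s\<bar> \<le> drift_lip * S"
proof -
  have "\<bar>drift x s - drift y s\<bar>
      \<le> r * \<bar>x s - y s\<bar> + \<bar>f0 (x s) (delay x s) - f0 (y s) (delay y s)\<bar>"
  proof -
    have "drift x s - drift y s
        = r * (x s - y s) + (f0 (x s) (delay x s) - f0 (y s) (delay y s))"
      by (simp add: drift_def algebra_simps)
    then show ?thesis
      using abs_triangle_ineq[of "r * (x s - y s)"] r_nonneg by (simp add: abs_mult)
  qed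
  also have "\<dots> \<le> r * S + Cf * (S + B * S * T)"
  proof (rule add_mono)
    show "r * \<bar>x s - y s\<bar> \<le> r * S" using close[of s] r_nonneg by (intro mult_left_mono) auto
    have "\<bar>f0 (x s) (delay x s) - f0 (y s) (delay y s)\<bar>
        \<le> Cf * (\<bar>x s - y s\<bar> + \<bar>delay x s - delay y s\<bar>)"
      by (rule f0_lip)
    also have "\<dots> \<le> Cf * (S + B * S * T)"
      using close[of s] delay_diff_bound[OF x y s close] Cf_nonneg
      by (intro mult_left_mono add_mono) auto
    finally show "\<bar>f0 (x s) (delay x s) - f0 (y s) (delay y s)\<bar> \<le> Cf * (S + B * S * T)" .
  qed
  also have "\<dots> = drift_lip * S" by (simp add: drift_lip_def algebra_simps)
  finally show ?thesis .
qed

text \<open>Two states with the same data which agree before \<open>t\<^sub>0\<close> and stay within distance \<open>S\<close>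
  up to \<open>t\<^sub>1\<close> satisfy \<open>|x(t) - y(t)| \<le> drift_lip \<cdot> S \<cdot> (t - t\<^sub>0)\<close> on \<open>[t\<^sub>0, t\<^sub>1]\<close>: the controls cancel
  and the drifts coincide before \<open>t\<^sub>0\<close>.\<close>
lemma state_diff_bound:
  assumes L: "L2_on T (snd \<eta>)"
    and sx: "is_state T r a f0 \<eta> c x" and sy: "is_state T r a f0 \<eta> c y"
    and t0: "t0 \<ge> 0" and agree: "\<forall>t<t0. x t = y t"
    and close: "\<And>u. u \<le> t1 \<Longrightarrow> \<bar>x u - y u\<bar> \<le> S" and t: "t0 \<le> t" "t \<le> t1"
  shows "\<bar>x t - y t\<bar> \<le> drift_lip * S * (t - t0)"
proof -
  have px: "history_path T (snd \<eta>) x" and py: "history_path T (snd \<eta>) y"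
    using state_history_path[OF L] sx sy by auto
  have S_nonneg: "S \<ge> 0" using close[of t] t by linarith
  have ix: "set_integrable lborel {0..t} (\<lambda>s. drift x s - c s)"
    and x_eq: "x t = fst \<eta> + (LINT s:{0..t}|lborel. drift x s - c s)"
    and iy: "set_integrable lborel {0..t} (\<lambda>s. drift y s - c s)"
    and y_eq: "y t = fst \<eta> + (LINT s:{0..t}|lborel. drift y s - c s)"
    using sx sy t t0 unfolding is_state_iff by auto
  note idiff = set_integral_diff(1)[OF ix iy]
  have "\<bar>x t - y t\<bar> = \<bar>LINT s:{0..t}|lborel. (drift x s - c s) - (drift y s - c s)\<bar>"
    using x_eq y_eq set_integral_diff(2)[OF ix iy] by simp
  also have "\<dots> \<le> (LINT s:{0..t}|lborel. norm ((drift x s - c s) - (drift y s - c s)))"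
    using set_integral_norm_bound[OF idiff] by simp
  also have "\<dots> \<le> (\<integral>s. (drift_lip * S) * indicator {t0..t} s \<partial>lborel)"
    unfolding set_lebesgue_integral_def
  proof (rule integral_mono)
    show "integrable lborel
        (\<lambda>s. indicator {0..t} s *\<^sub>R norm ((drift x s - c s) - (drift y s - c s)))"
      using set_integrable_abs[OF idiff] unfolding set_integrable_def by simp
    show "integrable lborel (\<lambda>s. (drift_lip * S) * indicator {t0..t} s)"
      by (rule borel_integrable_atLeastAtMost) auto
    fix s :: real
    have "delay x s = delay y s" if "s < t0"
      unfolding delay_def by (rule set_lebesgue_integral_cong) (use that agree in auto)
    then have "drift x s = drift y s" if "s < t0"
      using agree that by (simp add: drift_def)
    moreover have "\<bar>drift x s - drift y s\<bar> \<le> drift_lip * S" if "0 \<le> s" "s \<le> t"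
      by (rule drift_diff_bound[OF px py that(1)]) (use close that t in auto)
    ultimately show "indicator {0..t} s *\<^sub>R norm ((drift x s - c s) - (drift y s - c s))
        \<le> (drift_lip * S) * indicator {t0..t} s"
      using drift_lip_nonneg S_nonneg t0 by (cases "s < t0") (auto split: split_indicator)
  qed
  also have "\<dots> = drift_lip * S * (t - t0)" using t by simp
  finally show ?thesis .
qed

text \<open>If \<open>S\<close> is the maximal distance on
  \<open>[t\<^sub>0, t\<^sub>0 + h]\<close>, the previous bound gives \<open>S \<le> drift_lip \<cdot> S \<cdot> h \<le> S/2\<close>.\<close>
lemma state_agree_step:
  assumes L: "L2_on T (snd \<eta>)"
    and sx: "is_state T r a f0 \<eta> c x" and sy: "is_state T r a f0 \<eta> c y"
    and t0: "t0 \<ge> 0" and agree: "\<forall>t<t0. x t = y t"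
  shows "\<forall>t < t0 + 1 / (2 * drift_lip + 2). x t = y t"
proof -
  define h where "h = 1 / (2 * drift_lip + 2)"
  have h: "h > 0" and Kh: "drift_lip * h \<le> 1/2"
    unfolding h_def using drift_lip_nonneg by (auto simp: field_simps)
  have "{t0..t0 + h} \<subseteq> {0..}" using t0 by auto
  then have "continuous_on {t0..t0 + h} x" "continuous_on {t0..t0 + h} y"
    using sx sy continuous_on_subset unfolding is_state_iff by blast+
  then have dist_cont: "continuous_on {t0..t0 + h} (\<lambda>t. \<bar>x t - y t\<bar>)"
    by (intro continuous_intros)
  obtain tm where tm: "tm \<in> {t0..t0 + h}"
    and max: "\<forall>t\<in>{t0..t0 + h}. \<bar>x t - y t\<bar> \<le> \<bar>x tm - y tm\<bar>"
    using continuous_attains_sup[OF compact_Icc _ dist_cont] h by auto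
  define S where "S = \<bar>x tm - y tm\<bar>"
  have S_nonneg: "S \<ge> 0" unfolding S_def by simp
  have close: "\<bar>x u - y u\<bar> \<le> S" if "u \<le> t0 + h" for u
    using agree max that S_nonneg unfolding S_def by (cases "u < t0") auto
  have "S \<le> drift_lip * S * (tm - t0)"
    using state_diff_bound[OF L sx sy t0 agree close] tm unfolding S_def by auto
  also have "\<dots> \<le> drift_lip * S * h"
    using tm drift_lip_nonneg S_nonneg by (intro mult_left_mono) auto
  also have "\<dots> = (drift_lip * h) * S" by simp
  also have "\<dots> \<le> 1/2 * S" using Kh S_nonneg by (rule mult_right_mono)
  finally have "S = 0" using S_nonneg by simp
  with close show ?thesis unfolding h_def by auto
qed

lemma state_unique:
  assumes L: "L2_on T (snd \<eta>)"
    and sx: "is_state T r a f0 \<eta> c x" and sy: "is_state T r a f0 \<eta> c y"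
  shows "x = y"
proof
  define h where "h = 1 / (2 * drift_lip + 2)"
  have h: "h > 0" unfolding h_def using drift_lip_nonneg by simp
  have agree: "\<forall>t < real n * h. x t = y t" for n
  proof (induction n)
    case 0 then show ?case using sx sy unfolding is_state_iff by simp
  next
    case (Suc n)
    then show ?case
      using state_agree_step[OF L sx sy _ Suc] h unfolding h_def[symmetric]
      by (simp add: algebra_simps)
  qed
  fix t
  obtain n where "t < real n * h" using ex_less_of_nat_mult[OF h] by blast
  then show "x t = y t" using agree by blast
qed

lemma state_eq:
  assumes "L2_on T (snd \<eta>)" "is_state T r a f0 \<eta> c x"
  shows "state T r a f0 \<eta> c = x"
  unfolding state_def
proof (rule the_equality)
  show "is_state T r a f0 \<eta> c x" by (fact assms(2))
  show "y = x" if "is_state T r a f0 \<eta> c y" for y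
    using state_unique[OF assms(1) that assms(2)] .
qed

text \<open>The drift of a trajectory is locally integrable: it is measurable, and bounded on
  bounded time intervals since the trajectory is continuous and the delay term bounded.\<close>
lemma drift_integrable:
  assumes x: "history_path T g x" and t: "t \<ge> 0"
  shows "set_integrable lborel {0..t} (drift x)"
proof -
  have x_cont: "continuous_on {0..t} x"
    using x by (auto simp: history_path_def elim: continuous_on_subset)
  obtain DX where DX: "DX \<in> borel_measurable borel" "\<forall>s\<ge>0. delay x s = DX s"
    using delay_measurable[OF x] by blast
  define \<Phi> where "\<Phi> = (\<lambda>s. f0 (x s) (delay x s))"
  have "(\<lambda>s. indicator {0..t} s *\<^sub>R x s) \<in> borel_measurable borel"
    by (rule borel_measurable_continuous_on_indicator[OF _ x_cont]) auto
  then have "(\<lambda>s. f0 (indicator {0..t} s *\<^sub>R x s) (DX s)) \<in> borel_measurable borel"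
    by (rule measurable_lipschitz_comp[OF f0_lip _ DX(1)])
  then have "(\<lambda>s. indicator {0..t} s *\<^sub>R f0 (indicator {0..t} s *\<^sub>R x s) (DX s))
      \<in> borel_measurable borel"
    by (intro borel_measurable_scaleR) auto
  moreover have "(\<lambda>s. indicator {0..t} s *\<^sub>R f0 (indicator {0..t} s *\<^sub>R x s) (DX s))
      = (\<lambda>s. indicator {0..t} s *\<^sub>R \<Phi> s)"
    using DX(2) unfolding \<Phi>_def by (auto simp: fun_eq_iff split: split_indicator)
  ultimately have \<Phi>_meas: "set_borel_measurable lborel {0..t} \<Phi>"
    unfolding set_borel_measurable_def by simp
  have abs_cont: "continuous_on {0..t} (\<lambda>s. \<bar>x s\<bar>)" by (intro continuous_intros x_cont)
  obtain sm where sm: "\<forall>s\<in>{0..t}. \<bar>x s\<bar> \<le> \<bar>x sm\<bar>"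
    using continuous_attains_sup[OF compact_Icc _ abs_cont] t by auto
  define K where "K = \<bar>f0 0 0\<bar> + Cf * (\<bar>x sm\<bar> + B * (LINT u:{-T..t}|lborel. \<bar>x u\<bar>))"
  have "\<bar>\<Phi> s\<bar> \<le> K" if s: "s \<in> {0..t}" for s
  proof -
    have "\<bar>\<Phi> s - f0 0 0\<bar> \<le> Cf * (\<bar>x s - 0\<bar> + \<bar>delay x s - 0\<bar>)"
      unfolding \<Phi>_def by (rule f0_lip)
    also have "\<dots> \<le> Cf * (\<bar>x sm\<bar> + B * (LINT u:{-T..t}|lborel. \<bar>x u\<bar>))"
      using sm s delay_bound[OF x, of s t] Cf_nonneg by (intro mult_left_mono add_mono) auto
    finally show ?thesis unfolding K_def by linarith
  qed
  moreover have "set_integrable lborel {0..t} (\<lambda>s. K)"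
    by (rule borel_integrable_atLeastAtMost') (auto intro: continuous_intros)
  ultimately have "set_integrable lborel {0..t} \<Phi>"
    using set_integrable_bound[OF _ \<Phi>_meas, of "\<lambda>_. K"] by force
  moreover have "set_integrable lborel {0..t} (\<lambda>s. r * x s)"
    by (intro set_integrable_mult_right borel_integrable_atLeastAtMost' x_cont)
  ultimately show ?thesis
    unfolding drift_def \<Phi>_def by (rule set_integral_add(1)[rotated])
qed

end

subsection \<open>The objective as an extended-real integral\<close>

definition eintegral :: "(real \<Rightarrow> real) \<Rightarrow> ereal" where
  "eintegral f = enn2ereal (\<integral>\<^sup>+t. ennreal (f t) \<partial>lborel) - enn2ereal (\<integral>\<^sup>+t. ennreal (- f t) \<partial>lborel)"

lemma objective_eq_eintegral:
  "objective \<rho> U1 U2 c x = eintegral (\<lambda>t. indicator {0..} t * (exp (-\<rho> * t) * (U1 (c t) + U2 (x t))))"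
  by (simp add: objective_def eintegral_def)

lemma eintegral_integrable:
  assumes "integrable lborel f" shows "eintegral f = ereal (integral\<^sup>L lborel f)"
proof -
  obtain p q where p: "(\<integral>\<^sup>+t. ennreal (f t) \<partial>lborel) = ennreal p" "p \<ge> 0"
    and q: "(\<integral>\<^sup>+t. ennreal (- f t) \<partial>lborel) = ennreal q" "q \<ge> 0"
  proof -
    have "(\<integral>\<^sup>+t. ennreal (f t) \<partial>lborel) \<noteq> \<infinity>" "(\<integral>\<^sup>+t. ennreal (- f t) \<partial>lborel) \<noteq> \<infinity>"
      using integrableD[OF assms] by auto
    then show ?thesis
      using that
      by (cases "\<integral>\<^sup>+t. ennreal (f t) \<partial>lborel" rule: ennreal_cases;
          cases "\<integral>\<^sup>+t. ennreal (- f t) \<partial>lborel" rule: ennreal_cases) auto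
  qed
  show ?thesis
    unfolding eintegral_def real_lebesgue_integral_def[OF assms] p(1) q(1) using p(2) q(2) by simp
qed

lemma eintegral_finite_positive_part:
  assumes "(\<integral>\<^sup>+t. ennreal (f t) \<partial>lborel) \<noteq> \<infinity>"
  shows "eintegral f \<noteq> \<infinity>"
    and "(\<integral>\<^sup>+t. ennreal (- f t) \<partial>lborel) = \<infinity> \<Longrightarrow> eintegral f = -\<infinity>"
proof -
  obtain p where p: "(\<integral>\<^sup>+t. ennreal (f t) \<partial>lborel) = ennreal p" "p \<ge> 0"
    using assms by (cases "\<integral>\<^sup>+t. ennreal (f t) \<partial>lborel" rule: ennreal_cases) auto
  show "eintegral f \<noteq> \<infinity>"
    unfolding eintegral_def p(1) using p(2)
    by (cases "\<integral>\<^sup>+t. ennreal (- f t) \<partial>lborel" rule: ennreal_cases) auto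
  show "eintegral f = -\<infinity>" if "(\<integral>\<^sup>+t. ennreal (- f t) \<partial>lborel) = \<infinity>"
    unfolding eintegral_def p(1) that using p(2) by simp
qed

lemma positive_part_finite:
  assumes E: "integrable lborel E" and le: "\<And>t. f t \<le> E t"
  shows "(\<integral>\<^sup>+t. ennreal (f t) \<partial>lborel) \<noteq> \<infinity>"
proof -
  have "(\<integral>\<^sup>+t. ennreal (f t) \<partial>lborel) \<le> (\<integral>\<^sup>+t. ennreal (E t) \<partial>lborel)"
    by (intro nn_integral_mono ennreal_leI le)
  moreover have "(\<integral>\<^sup>+t. ennreal (E t) \<partial>lborel) < \<infinity>" using integrableD[OF E] by (simp add: less_top)
  ultimately show ?thesis by (simp add: top.not_eq_extremum)
qed

lemma eintegral_concave:
  fixes f f' g E :: "real \<Rightarrow> real"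
  assumes meas: "f \<in> borel_measurable lborel" "f' \<in> borel_measurable lborel"
      "g \<in> borel_measurable lborel"
    and E: "integrable lborel E" and bounded: "\<And>t. f t \<le> E t" "\<And>t. f' t \<le> E t" "\<And>t. g t \<le> E t"
    and l: "0 < l" "l < 1" and pointwise: "\<And>t. l * f t + (1 - l) * f' t \<le> g t"
  shows "ereal l * eintegral f + ereal (1 - l) * eintegral f' \<le> eintegral g"
proof -
  note pos = positive_part_finite[OF E bounded(1)] positive_part_finite[OF E bounded(2)]
    positive_part_finite[OF E bounded(3)]
  have fin: "eintegral f \<noteq> \<infinity>" "eintegral f' \<noteq> \<infinity>"
    using eintegral_finite_positive_part(1) pos by auto
  show ?thesis
  proof (cases "integrable lborel f \<and> integrable lborel f'")
    case True
    then have fi: "integrable lborel f" and fi': "integrable lborel f'" by auto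
    have hi: "integrable lborel (\<lambda>t. l * f t + (1 - l) * f' t)" using fi fi' by auto
    have "(\<integral>\<^sup>+t. ennreal (- g t) \<partial>lborel) \<le> (\<integral>\<^sup>+t. ennreal (- (l * f t + (1 - l) * f' t)) \<partial>lborel)"
      using pointwise by (intro nn_integral_mono ennreal_leI) (smt (verit))
    moreover have "(\<integral>\<^sup>+t. ennreal (- (l * f t + (1 - l) * f' t)) \<partial>lborel) < \<infinity>"
      using integrableD[OF hi] by (simp add: less_top)
    ultimately have "(\<integral>\<^sup>+t. ennreal (- g t) \<partial>lborel) \<noteq> \<infinity>" by (simp add: top.not_eq_extremum)
    then have gi: "integrable lborel g" using meas(3) pos(3) unfolding real_integrable_def by auto
    have "l * integral\<^sup>L lborel f + (1 - l) * integral\<^sup>L lborel f'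
        = integral\<^sup>L lborel (\<lambda>t. l * f t + (1 - l) * f' t)"
      using fi fi' by simp
    also have "\<dots> \<le> integral\<^sup>L lborel g" using hi gi pointwise by (rule integral_mono)
    finally show ?thesis
      unfolding eintegral_integrable[OF fi] eintegral_integrable[OF fi'] eintegral_integrable[OF gi]
      by simp
  next
    case False
    then have "eintegral f = -\<infinity> \<or> eintegral f' = -\<infinity>"
      using meas pos eintegral_finite_positive_part(2) unfolding real_integrable_def by blast
    then have "ereal l * eintegral f + ereal (1 - l) * eintegral f' = -\<infinity>"
      using fin l by (cases "eintegral f"; cases "eintegral f'") auto
    then show ?thesis by (rule ord_eq_le_trans) simp
  qed
qed

lemma discount_integrable:
  fixes \<rho> :: real
  assumes rho: "\<rho> > 0"
  shows "integrable lborel (\<lambda>t. indicator {0..} t * exp (-\<rho> * t))"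
proof -
  have "(\<lambda>x. exp (-\<rho> * x)) absolutely_integrable_on {0..}"
    by (rule nonnegative_absolutely_integrable_1[OF integrable_on_exp_minus_to_infinity[OF rho]]) auto
  then have i: "integrable lebesgue (\<lambda>t. indicator {0..} t *\<^sub>R exp (-\<rho> * t))"
    unfolding set_integrable_def .
  have m: "(\<lambda>t. indicator {0..} t *\<^sub>R exp (-\<rho> * t)) \<in> borel_measurable lborel"
    using borel_measurable_continuous_on_indicator[of "{0..}" "\<lambda>t. exp (-\<rho> * t)"]
    by (auto intro: continuous_intros)
  show ?thesis using i integrable_completion[OF m] by simp
qed

subsection \<open>Monotone concave functions on the half-line\<close>

lemma mono_on_half_line_from_deriv:
  fixes U U' :: "real \<Rightarrow> real"
  assumes cont: "continuous_on {0..} U"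
    and deriv: "\<And>x. x > 0 \<Longrightarrow> (U has_real_derivative U' x) (at x) \<and> U' x \<ge> 0"
    and uv: "0 \<le> u" "u \<le> v"
  shows "U u \<le> U v"
proof (rule DERIV_nonneg_imp_increasing_open[OF uv(2)])
  show "continuous_on {u..v} U" by (rule continuous_on_subset[OF cont]) (use uv in auto)
next
  fix x assume "u < x" "x < v"
  then have "x > 0" using uv by simp
  then show "\<exists>y. (U has_real_derivative y) (at x) \<and> 0 \<le> y" using deriv by blast
qed

text \<open>A nondecreasing function, continuous on \<open>[0,\<infinity>)\<close> and concave on \<open>(0,\<infinity>)\<close>, is concave on
  \<open>[0,\<infinity>)\<close>: at the endpoint \<open>0\<close> the concavity inequality follows by letting a positive point
  tend to \<open>0\<close>.\<close>
lemma concave_on_half_line: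
  fixes U :: "real \<Rightarrow> real"
  assumes cont: "continuous_on {0..} U" and mono: "\<And>u v. 0 \<le> u \<Longrightarrow> u \<le> v \<Longrightarrow> U u \<le> U v"
    and conc: "concave_on {0<..} U"
  shows "concave_on {0..} U"
proof (rule concave_on_linorderI)
  fix t x y :: real
  assume t: "0 < t" "t < 1" and x: "x \<in> {0..}" and y: "y \<in> {0..}" and xy: "x < y"
  show "(1 - t) * U x + t * U y \<le> U ((1 - t) *\<^sub>R x + t *\<^sub>R y)"
  proof (cases "x > 0")
    case True
    then show ?thesis using concave_onD[OF conc, of t x y] t xy by auto
  next
    case False
    then have x0: "x = 0" using x by simp
    define e where "e = (\<lambda>n::nat. 1 / (1 + real n))"
    have e_pos: "e n > 0" for n unfolding e_def by simp
    have "e \<longlonglongrightarrow> 0" unfolding e_def using LIMSEQ_inverse_real_of_nat by (simp add: inverse_eq_divide)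
    then have "(\<lambda>n. (1 - t) * e n + t * y) \<longlonglongrightarrow> t * y"
      by (auto intro!: tendsto_eq_intros)
    moreover have "(1 - t) * e n + t * y \<in> {0..}" for n
      using e_pos[of n] t y by (simp add: add_nonneg_nonneg)
    ultimately have lim: "(\<lambda>n. U ((1 - t) * e n + t * y)) \<longlonglongrightarrow> U (t * y)"
      using cont t y unfolding continuous_on_sequentially comp_def by auto
    have "(1 - t) * U 0 + t * U y \<le> U ((1 - t) * e n + t * y)" for n
    proof -
      have "(1 - t) * U 0 \<le> (1 - t) * U (e n)"
        using mono[of 0 "e n"] e_pos[of n] t by (intro mult_left_mono) auto
      also have "(1 - t) * U (e n) + t * U y \<le> U ((1 - t) *\<^sub>R e n + t *\<^sub>R y)"
        using concave_onD[OF conc, of t "e n" y] e_pos[of n] t xy x0 by auto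
      finally show ?thesis by simp
    qed
    then have "(1 - t) * U 0 + t * U y \<le> U (t * y)"
      by (intro LIMSEQ_le_const[OF lim]) auto
    then show ?thesis using x0 by simp
  qed
qed auto

subsection \<open>A supremum inequality in the extended reals\<close>

lemma SUP_add_SUP_le:
  fixes F :: "'a \<Rightarrow> ereal" and G :: "'b \<Rightarrow> ereal"
  assumes "A \<noteq> {}" "B \<noteq> {}" and fin: "\<bar>(SUP j\<in>B. G j)\<bar> \<noteq> \<infinity>"
    and le: "\<And>i j. i \<in> A \<Longrightarrow> j \<in> B \<Longrightarrow> F i + G j \<le> z"
  shows "(SUP i\<in>A. F i) + (SUP j\<in>B. G j) \<le> z"
proof -
  have "F i + (SUP j\<in>B. G j) \<le> z" if i: "i \<in> A" for i
  proof (cases "F i = -\<infinity>")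
    case True then show ?thesis using fin by auto
  next
    case False
    then have "F i + (SUP j\<in>B. G j) = (SUP j\<in>B. F i + G j)"
      using SUP_ereal_add_right[OF \<open>B \<noteq> {}\<close>] by simp
    also have "\<dots> \<le> z" using le i by (auto intro: SUP_least)
    finally show ?thesis .
  qed
  moreover have "(SUP j\<in>B. G j) \<noteq> -\<infinity>" using fin by auto
  ultimately show ?thesis
    using SUP_ereal_add_left[OF \<open>A \<noteq> {}\<close>] by (metis (no_types, lifting) SUP_least)
qed


subsection \<open>Convex combinations of states\<close>

lemma admissibleD:
  assumes "c \<in> admissible T r a f0 \<eta>"
  shows "\<forall>t\<ge>0. c t \<ge> 0" and "\<forall>t\<ge>0. set_integrable lborel {0..t} c"
    and "is_state T r a f0 \<eta> c (state T r a f0 \<eta> c)"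
    and "\<forall>t\<ge>0. state T r a f0 \<eta> c t > 0"
  using assms by (auto simp: admissible_def control_def)

locale concave_state_equation = state_equation +
  assumes f0_concave: "concave_on ({0..} \<times> UNIV) (\<lambda>p. f0 (fst p) (snd p))"
begin

text \<open>The drift is concave along convex combinations of nonnegative trajectories: this is
  where linearity of the delay term and concavity of \<open>f\<^sub>0\<close> combine.\<close>
lemma drift_mix_concave:
  assumes x: "history_path T g x" and y: "history_path T h y" and s: "s \<ge> 0"
    and pos: "x s \<ge> 0" "y s \<ge> 0" and l: "0 \<le> l" "l \<le> 1"
  shows "l * drift x s + (1 - l) * drift y s \<le> drift (mix l x y) s"
proof -
  have "(1 - (1 - l)) * f0 (x s) (delay x s) + (1 - l) * f0 (y s) (delay y s)
      \<le> f0 (fst ((1 - (1 - l)) *\<^sub>R (x s, delay x s) + (1 - l) *\<^sub>R (y s, delay y s)))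
           (snd ((1 - (1 - l)) *\<^sub>R (x s, delay x s) + (1 - l) *\<^sub>R (y s, delay y s)))"
    using concave_onD[OF f0_concave, of "1 - l" "(x s, delay x s)" "(y s, delay y s)"] pos l
    by simp
  moreover have "delay (mix l x y) s = l * delay x s + (1 - l) * delay y s"
    using delay_linear[OF x y s] by (simp add: mix_def[abs_def])
  ultimately have "l * f0 (x s) (delay x s) + (1 - l) * f0 (y s) (delay y s)
      \<le> f0 (mix l x y s) (delay (mix l x y) s)"
    by (simp add: mix_def)
  moreover have "l * drift x s + (1 - l) * drift y s
      = r * mix l x y s + (l * f0 (x s) (delay x s) + (1 - l) * f0 (y s) (delay y s))"
    by (simp add: drift_def mix_def algebra_simps)
  ultimately show ?thesis by (simp add: drift_def)
qed

text \<open>The control driving the convex combination of two states: the convex combination of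
  the two controls plus the gain in drift obtained by concavity.\<close>
definition mix_control :: "real \<Rightarrow> (real \<Rightarrow> real) \<Rightarrow> (real \<Rightarrow> real)
    \<Rightarrow> (real \<Rightarrow> real) \<Rightarrow> (real \<Rightarrow> real) \<Rightarrow> real \<Rightarrow> real" where
  "mix_control l c c' x x' s =
     mix l c c' s + (drift (mix l x x') s - l * drift x s - (1 - l) * drift x' s)"

text \<open>The combined state: \<open>mix l x x'\<close> solves the state equation for the combined datum and
  the control \<open>mix_control\<close>, since the two drifts are integrated linearly.\<close>
lemma mix_is_state:
  assumes L: "L2_on T (snd \<eta>)" "L2_on T (snd \<eta>')"
    and sx: "is_state T r a f0 \<eta> c x" and sx': "is_state T r a f0 \<eta>' c' x'"
    and l: "0 \<le> l" "l \<le> 1"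
  shows "is_state T r a f0 (comb l \<eta> \<eta>') (mix_control l c c' x x') (mix l x x')"
proof -
  have x_int: "\<And>t. t \<ge> 0 \<Longrightarrow> set_integrable lborel {0..t} (\<lambda>s. drift x s - c s)"
    and x_eq: "\<And>t. t \<ge> 0 \<Longrightarrow> x t = fst \<eta> + (LINT s:{0..t}|lborel. drift x s - c s)"
    and x'_int: "\<And>t. t \<ge> 0 \<Longrightarrow> set_integrable lborel {0..t} (\<lambda>s. drift x' s - c' s)"
    and x'_eq: "\<And>t. t \<ge> 0 \<Longrightarrow> x' t = fst \<eta>' + (LINT s:{0..t}|lborel. drift x' s - c' s)"
    using sx sx' unfolding is_state_iff by blast+
  have paths: "history_path T (mix l (snd \<eta>) (snd \<eta>')) (mix l x x')"
    using history_path_mix[OF state_history_path[OF L(1) sx] state_history_path[OF L(2) sx'] l] .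
  have integrand: "drift (mix l x x') s - mix_control l c c' x x' s
      = l * (drift x s - c s) + (1 - l) * (drift x' s - c' s)" for s
    by (simp add: mix_control_def mix_def algebra_simps)
  have "set_integrable lborel {0..t} (\<lambda>s. l * (drift x s - c s) + (1 - l) * (drift x' s - c' s))
      \<and> mix l x x' t = fst (comb l \<eta> \<eta>')
          + (LINT s:{0..t}|lborel. l * (drift x s - c s) + (1 - l) * (drift x' s - c' s))"
    if t: "t \<ge> 0" for t
  proof -
    have i: "set_integrable lborel {0..t} (\<lambda>s. l * (drift x s - c s))"
      and i': "set_integrable lborel {0..t} (\<lambda>s. (1 - l) * (drift x' s - c' s))"
      using x_int[OF t] x'_int[OF t] by (auto intro: set_integrable_mult_right)
    have "(LINT s:{0..t}|lborel. l * (drift x s - c s) + (1 - l) * (drift x' s - c' s))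
        = l * (LINT s:{0..t}|lborel. drift x s - c s)
          + (1 - l) * (LINT s:{0..t}|lborel. drift x' s - c' s)"
      using set_integral_add(2)[OF i i'] by simp
    then show ?thesis
      using set_integral_add(1)[OF i i'] x_eq[OF t] x'_eq[OF t]
      by (simp add: comb_def mix_def algebra_simps)
  qed
  moreover have "\<forall>t<0. mix l x x' t = snd (comb l \<eta> \<eta>') t"
    using paths by (simp add: history_path_def comb_def mix_def[abs_def])
  moreover have "continuous_on {0..} (mix l x x')"
    using paths by (simp add: history_path_def)
  ultimately show ?thesis unfolding is_state_iff integrand by blast
qed

lemma mix_control_integrable:
  assumes L: "L2_on T (snd \<eta>)" "L2_on T (snd \<eta>')"
    and sx: "is_state T r a f0 \<eta> c x" and sx': "is_state T r a f0 \<eta>' c' x'"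
    and l: "0 \<le> l" "l \<le> 1" and t: "t \<ge> 0"
  shows "set_integrable lborel {0..t} (mix_control l c c' x x')"
proof -
  have px: "history_path T (snd \<eta>) x" and px': "history_path T (snd \<eta>') x'"
    using state_history_path L sx sx' by auto
  have "set_integrable lborel {0..t} (\<lambda>s. drift x s - c s)"
    "set_integrable lborel {0..t} (\<lambda>s. drift x' s - c' s)"
    using sx sx' t unfolding is_state_iff by blast+
  then have "set_integrable lborel {0..t} (\<lambda>s. l * (drift x s - c s))"
    "set_integrable lborel {0..t} (\<lambda>s. (1 - l) * (drift x' s - c' s))"
    by (auto intro: set_integrable_mult_right)
  moreover have "set_integrable lborel {0..t} (drift (mix l x x'))"
    using drift_integrable[OF history_path_mix[OF px px' l] t] .
  ultimately have "set_integrable lborel {0..t}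
      (\<lambda>s. drift (mix l x x') s - l * (drift x s - c s) - (1 - l) * (drift x' s - c' s))"
    using set_integral_diff(1) by blast
  moreover have "mix_control l c c' x x'
      = (\<lambda>s. drift (mix l x x') s - l * (drift x s - c s) - (1 - l) * (drift x' s - c' s))"
    by (simp add: fun_eq_iff mix_control_def mix_def algebra_simps)
  ultimately show ?thesis by simp
qed

text \<open>The combination of two admissible controls: \<open>mix_control\<close> dominates the convex
  combination of the controls, hence is nonnegative, and keeps the state positive.\<close>
lemma mix_control_admissible:
  assumes H: "\<eta> \<in> H_plus T" "\<eta>' \<in> H_plus T" and l: "0 \<le> l" "l \<le> 1"
    and c: "c \<in> admissible T r a f0 \<eta>" and c': "c' \<in> admissible T r a f0 \<eta>'"
  defines "x \<equiv> state T r a f0 \<eta> c" and "x' \<equiv> state T r a f0 \<eta>' c'"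
  shows "mix_control l c c' x x' \<in> admissible T r a f0 (comb l \<eta> \<eta>')"
    and "state T r a f0 (comb l \<eta> \<eta>') (mix_control l c c' x x') = mix l x x'"
    and "\<And>s. s \<ge> 0 \<Longrightarrow> mix l c c' s \<le> mix_control l c c' x x' s"
proof -
  have L: "L2_on T (snd \<eta>)" "L2_on T (snd \<eta>')" using H by (auto simp: H_plus_def)
  note adm = admissibleD[OF c, folded x_def] admissibleD[OF c', folded x'_def]
  have sx: "is_state T r a f0 \<eta> c x" and x_pos: "\<forall>t\<ge>0. x t > 0"
    and sx': "is_state T r a f0 \<eta>' c' x'" and x'_pos: "\<forall>t\<ge>0. x' t > 0"
    and c_nonneg: "\<forall>t\<ge>0. c t \<ge> 0" and c'_nonneg: "\<forall>t\<ge>0. c' t \<ge> 0"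
    using adm by blast+
  have L_comb: "L2_on T (snd (comb l \<eta> \<eta>'))"
    using comb_in_H_plus[OF H l] by (simp add: H_plus_def)
  have s_comb: "is_state T r a f0 (comb l \<eta> \<eta>') (mix_control l c c' x x') (mix l x x')"
    using mix_is_state[OF L sx sx' l] .
  show st: "state T r a f0 (comb l \<eta> \<eta>') (mix_control l c c' x x') = mix l x x'"
    by (rule state_eq[OF L_comb s_comb])
  show ge: "mix l c c' s \<le> mix_control l c c' x x' s" if s: "s \<ge> 0" for s
  proof -
    have "l * drift x s + (1 - l) * drift x' s \<le> drift (mix l x x') s"
      using drift_mix_concave[OF state_history_path[OF L(1) sx] state_history_path[OF L(2) sx'] s]
        x_pos x'_pos l s by (simp add: less_imp_le)
    then show ?thesis unfolding mix_control_def by linarith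
  qed
  have nonneg: "mix_control l c c' x x' t \<ge> 0" if t: "t \<ge> 0" for t
  proof -
    have "0 \<le> mix l c c' t" using c_nonneg c'_nonneg l t by (simp add: mix_def)
    then show ?thesis using ge[OF t] by linarith
  qed
  have pos: "mix l x x' t > 0" if t: "t \<ge> 0" for t
  proof -
    have xt: "0 < x t" and x't: "0 < x' t" using x_pos x'_pos t by auto
    have "0 \<le> l * x t" "0 \<le> (1 - l) * x' t" using l xt x't by simp_all
    moreover have "0 < l * x t \<or> 0 < (1 - l) * x' t"
      using l xt x't by (cases "l = 0") simp_all
    ultimately show ?thesis unfolding mix_def by linarith
  qed
  have ctrl: "control (mix_control l c c' x x')"
    unfolding control_def by (intro conjI allI impI nonneg mix_control_integrable[OF L sx sx' l])
  show "mix_control l c c' x x' \<in> admissible T r a f0 (comb l \<eta> \<eta>')"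
    unfolding admissible_def mem_Collect_eq st by (intro conjI allI impI ctrl s_comb pos)
qed

end


subsection \<open>Concavity of the value function\<close>

locale control_problem = concave_state_equation +
  fixes \<rho> M :: real and U1 U2 :: "real \<Rightarrow> real"
  assumes rho_pos: "\<rho> > 0" and M_nonneg: "M \<ge> 0"
    and utility_bound: "\<And>u v. 0 \<le> u \<Longrightarrow> 0 < v \<Longrightarrow> U1 u + U2 v \<le> M"
    and U1_cont: "continuous_on {0..} U1"
    and U1_mono: "\<And>u v. 0 \<le> u \<Longrightarrow> u \<le> v \<Longrightarrow> U1 u \<le> U1 v"
    and U1_concave: "concave_on {0..} U1"
    and U2_cont: "continuous_on {0<..} U2"
    and U2_concave: "concave_on {0<..} U2"
begin

definition payoff :: "(real \<Rightarrow> real) \<Rightarrow> (real \<Rightarrow> real) \<Rightarrow> real \<Rightarrow> real" where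
  "payoff c x t = indicator {0..} t * (exp (-\<rho> * t) * (U1 (c t) + U2 (x t)))"

lemma J_eq_eintegral: "J T r \<rho> a f0 U1 U2 \<eta> c = eintegral (payoff c (state T r a f0 \<eta> c))"
  by (simp add: J_def objective_eq_eintegral payoff_def[abs_def])

definition payoff_bound :: "real \<Rightarrow> real" where
  "payoff_bound t = M * (indicator {0..} t * exp (-\<rho> * t))"

lemma payoff_bound_integrable: "integrable lborel payoff_bound"
  unfolding payoff_bound_def using discount_integrable[OF rho_pos] by simp

lemma payoff_le_bound:
  assumes "\<forall>t\<ge>0. c t \<ge> 0" "\<forall>t\<ge>0. x t > 0"
  shows "payoff c x t \<le> payoff_bound t"
proof (cases "t \<ge> 0")
  case True
  then have "exp (-\<rho> * t) * (U1 (c t) + U2 (x t)) \<le> exp (-\<rho> * t) * M"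
    using utility_bound assms by (intro mult_left_mono) auto
  then show ?thesis using True unfolding payoff_def payoff_bound_def by (simp add: mult.commute)
qed (simp add: payoff_def payoff_bound_def)

lemma payoff_measurable:
  assumes c_int: "\<forall>t\<ge>0. set_integrable lborel {0..t} c" and c_nonneg: "\<forall>t\<ge>0. c t \<ge> 0"
    and x_cont: "continuous_on {0..} x" and x_pos: "\<forall>t\<ge>0. x t > 0"
  shows "payoff c x \<in> borel_measurable lborel"
proof -
  have "continuous_on UNIV (\<lambda>z. U1 (max 0 z))"
    by (rule continuous_on_compose2[OF U1_cont]) (auto intro: continuous_intros)
  from measurable_compose[OF control_measurable[OF c_int] borel_measurable_continuous_onI[OF this]]
  have U1_meas: "(\<lambda>t. U1 (max 0 (indicator {0..} t * c t))) \<in> borel_measurable borel"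
    by (simp add: o_def)
  have "continuous_on {0..} (\<lambda>t. U2 (x t))"
    by (rule continuous_on_compose2[OF U2_cont x_cont]) (use x_pos in auto)
  then have U2_meas: "(\<lambda>t. indicator {0..} t *\<^sub>R U2 (x t)) \<in> borel_measurable borel"
    by (rule borel_measurable_continuous_on_indicator[rotated]) auto
  have exp_meas: "(\<lambda>t. indicator {0..} t *\<^sub>R exp (-\<rho> * t)) \<in> borel_measurable borel"
    by (rule borel_measurable_continuous_on_indicator) (auto intro!: continuous_intros)
  have "payoff c x = (\<lambda>t. (indicator {0..} t *\<^sub>R exp (-\<rho> * t))
      * (U1 (max 0 (indicator {0..} t * c t)) + indicator {0..} t *\<^sub>R U2 (x t)))"
    unfolding payoff_def using c_nonneg by (auto simp: fun_eq_iff split: split_indicator)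
  with exp_meas U1_meas U2_meas show ?thesis
    by (auto intro!: borel_measurable_times borel_measurable_add)
qed

lemma payoff_mix:
  assumes c_nonneg: "\<forall>t\<ge>0. c t \<ge> 0" "\<forall>t\<ge>0. c' t \<ge> 0"
    and x_pos: "\<forall>t\<ge>0. x t > 0" "\<forall>t\<ge>0. x' t > 0"
    and dom: "\<And>t. t \<ge> 0 \<Longrightarrow> mix l c c' t \<le> cl t" and l: "0 \<le> l" "l \<le> 1"
  shows "l * payoff c x t + (1 - l) * payoff c' x' t \<le> payoff cl (mix l x x') t"
proof (cases "t \<ge> 0")
  case True
  have "l * U1 (c t) + (1 - l) * U1 (c' t) \<le> U1 (mix l c c' t)"
    using concave_onD[OF U1_concave, of "1 - l" "c t" "c' t"] c_nonneg True l by (simp add: mix_def)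
  also have "\<dots> \<le> U1 (cl t)"
    using U1_mono[OF _ dom[OF True]] c_nonneg True l by (simp add: mix_def)
  finally have u1: "l * U1 (c t) + (1 - l) * U1 (c' t) \<le> U1 (cl t)" .
  have u2: "l * U2 (x t) + (1 - l) * U2 (x' t) \<le> U2 (mix l x x' t)"
    using concave_onD[OF U2_concave, of "1 - l" "x t" "x' t"] x_pos True l by (simp add: mix_def)
  have "exp (-\<rho> * t) * (l * (U1 (c t) + U2 (x t)) + (1 - l) * (U1 (c' t) + U2 (x' t)))
      \<le> exp (-\<rho> * t) * (U1 (cl t) + U2 (mix l x x' t))"
    using u1 u2 by (intro mult_left_mono) (auto simp: algebra_simps)
  then show ?thesis using True unfolding payoff_def by (simp add: algebra_simps)
qed (simp add: payoff_def)

lemma J_mix: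
  assumes H: "\<eta> \<in> H_plus T" "\<eta>' \<in> H_plus T" and l: "0 < l" "l < 1"
    and c: "c \<in> admissible T r a f0 \<eta>" and c': "c' \<in> admissible T r a f0 \<eta>'"
  defines "x \<equiv> state T r a f0 \<eta> c" and "x' \<equiv> state T r a f0 \<eta>' c'"
  shows "ereal l * J T r \<rho> a f0 U1 U2 \<eta> c + ereal (1 - l) * J T r \<rho> a f0 U1 U2 \<eta>' c'
      \<le> J T r \<rho> a f0 U1 U2 (comb l \<eta> \<eta>') (mix_control l c c' x x')"
proof -
  let ?cl = "mix_control l c c' x x'"
  have l': "0 \<le> l" "l \<le> 1" using l by auto
  note comb = mix_control_admissible[OF H l' c c', folded x_def x'_def]
  have L: "L2_on T (snd \<eta>)" "L2_on T (snd \<eta>')" using H by (auto simp: H_plus_def)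
  note adm = admissibleD[OF c, folded x_def] admissibleD[OF c', folded x'_def]
    admissibleD[OF comb(1), unfolded comb(2)]
  have paths: "history_path T (snd \<eta>) x" "history_path T (snd \<eta>') x'"
    using state_history_path[OF L(1) adm(3)] state_history_path[OF L(2) adm(7)] .
  have cont: "continuous_on {0..} x" "continuous_on {0..} x'" "continuous_on {0..} (mix l x x')"
    using paths history_path_mix[OF paths l'] unfolding history_path_def by blast+
  have "ereal l * eintegral (payoff c x) + ereal (1 - l) * eintegral (payoff c' x')
      \<le> eintegral (payoff ?cl (mix l x x'))"
  proof (rule eintegral_concave[OF _ _ _ payoff_bound_integrable _ _ _ l])
    show "payoff c x \<in> borel_measurable lborel"
      by (rule payoff_measurable[OF adm(2,1) cont(1) adm(4)])
    show "payoff c' x' \<in> borel_measurable lborel"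
      by (rule payoff_measurable[OF adm(6,5) cont(2) adm(8)])
    show "payoff ?cl (mix l x x') \<in> borel_measurable lborel"
      by (rule payoff_measurable[OF adm(10,9) cont(3) adm(12)])
    show "\<And>t. payoff c x t \<le> payoff_bound t"
      by (rule payoff_le_bound[OF adm(1,4)])
    show "\<And>t. payoff c' x' t \<le> payoff_bound t"
      by (rule payoff_le_bound[OF adm(5,8)])
    show "\<And>t. payoff ?cl (mix l x x') t \<le> payoff_bound t"
      by (rule payoff_le_bound[OF adm(9,12)])
    show "\<And>t. l * payoff c x t + (1 - l) * payoff c' x' t \<le> payoff ?cl (mix l x x') t"
      by (rule payoff_mix[OF adm(1,5,4,8) comb(3) l'])
  qed
  then show ?thesis unfolding J_eq_eintegral comb(2) x_def[symmetric] x'_def[symmetric] .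
qed

lemma J_le_bound:
  assumes "c \<in> admissible T r a f0 \<eta>"
  shows "J T r \<rho> a f0 U1 U2 \<eta> c \<le> ereal (integral\<^sup>L lborel payoff_bound)"
proof -
  let ?x = "state T r a f0 \<eta> c"
  have bound: "payoff c ?x t \<le> payoff_bound t" for t
    using admissibleD(1,4)[OF assms] by (rule payoff_le_bound)
  have "J T r \<rho> a f0 U1 U2 \<eta> c \<le> enn2ereal (\<integral>\<^sup>+t. ennreal (payoff c ?x t) \<partial>lborel)"
    unfolding J_eq_eintegral eintegral_def by (rule ereal_diff_le_self) (rule enn2ereal_nonneg)
  also have "\<dots> \<le> enn2ereal (\<integral>\<^sup>+t. ennreal (payoff_bound t) \<partial>lborel)"
    unfolding less_eq_ennreal.rep_eq[symmetric]
    by (intro nn_integral_mono ennreal_leI bound)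
  also have "(\<integral>\<^sup>+t. ennreal (payoff_bound t) \<partial>lborel) = ennreal (integral\<^sup>L lborel payoff_bound)"
    by (rule nn_integral_eq_integral[OF payoff_bound_integrable])
       (use M_nonneg in \<open>auto simp: payoff_bound_def\<close>)
  also have "enn2ereal (ennreal (integral\<^sup>L lborel payoff_bound))
      = ereal (integral\<^sup>L lborel payoff_bound)"
    by (rule enn2ereal_ennreal)
       (use M_nonneg in \<open>auto simp: payoff_bound_def intro!: integral_nonneg\<close>)
  finally show ?thesis .
qed

lemma domV_finite:
  assumes "\<eta> \<in> domV T r \<rho> a f0 U1 U2"
  shows "admissible T r a f0 \<eta> \<noteq> {}" and "\<bar>V T r \<rho> a f0 U1 U2 \<eta>\<bar> \<noteq> \<infinity>"
proof -
  have low: "V T r \<rho> a f0 U1 U2 \<eta> > -\<infinity>" using assms by (simp add: domV_def)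
  show "admissible T r a f0 \<eta> \<noteq> {}"
  proof
    assume "admissible T r a f0 \<eta> = {}"
    then have "V T r \<rho> a f0 U1 U2 \<eta> = -\<infinity>" by (simp add: V_def bot_ereal_def)
    with low show False by simp
  qed
  have "V T r \<rho> a f0 U1 U2 \<eta> \<le> ereal (integral\<^sup>L lborel payoff_bound)"
    unfolding V_def by (rule Sup_least) (use J_le_bound in blast)
  with low show "\<bar>V T r \<rho> a f0 U1 U2 \<eta>\<bar> \<noteq> \<infinity>" by auto
qed

text \<open>Concavity of \<open>V\<close> for \<open>0 < l < 1\<close>: scale the two suprema, then bound each sum of
  objectives by the value of the combined control.\<close>
lemma V_concave_interior:
  assumes d: "\<eta> \<in> domV T r \<rho> a f0 U1 U2" "\<eta>' \<in> domV T r \<rho> a f0 U1 U2" and l: "0 < l" "l < 1"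
  shows "ereal l * V T r \<rho> a f0 U1 U2 \<eta> + ereal (1 - l) * V T r \<rho> a f0 U1 U2 \<eta>'
           \<le> V T r \<rho> a f0 U1 U2 (comb l \<eta> \<eta>')"
proof -
  let ?J = "J T r \<rho> a f0 U1 U2" and ?A = "admissible T r a f0 \<eta>"
    and ?A' = "admissible T r a f0 \<eta>'"
  have H: "\<eta> \<in> H_plus T" "\<eta>' \<in> H_plus T" using d by (auto simp: domV_def)
  note fin = domV_finite[OF d(1)] domV_finite[OF d(2)]
  have eq: "ereal l * V T r \<rho> a f0 U1 U2 \<eta> = (SUP c\<in>?A. ereal l * ?J \<eta> c)"
    "ereal (1 - l) * V T r \<rho> a f0 U1 U2 \<eta>' = (SUP c'\<in>?A'. ereal (1 - l) * ?J \<eta>' c')"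
    unfolding V_def using Sup_ereal_mult_left'[OF fin(1)] Sup_ereal_mult_left'[OF fin(3)] l
    by simp_all
  have "\<bar>SUP c'\<in>?A'. ereal (1 - l) * ?J \<eta>' c'\<bar> \<noteq> \<infinity>"
    unfolding eq(2)[symmetric] using fin(4) by (cases "V T r \<rho> a f0 U1 U2 \<eta>'") auto
  then have "(SUP c\<in>?A. ereal l * ?J \<eta> c) + (SUP c'\<in>?A'. ereal (1 - l) * ?J \<eta>' c')
      \<le> V T r \<rho> a f0 U1 U2 (comb l \<eta> \<eta>')"
  proof (rule SUP_add_SUP_le[OF fin(1) fin(3)])
    fix c c' assume c: "c \<in> ?A" and c': "c' \<in> ?A'"
    let ?cl = "mix_control l c c' (state T r a f0 \<eta> c) (state T r a f0 \<eta>' c')"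
    have "?cl \<in> admissible T r a f0 (comb l \<eta> \<eta>')"
      using mix_control_admissible(1)[OF H _ _ c c'] l by simp
    then have "?J (comb l \<eta> \<eta>') ?cl \<le> V T r \<rho> a f0 U1 U2 (comb l \<eta> \<eta>')"
      unfolding V_def by (rule SUP_upper)
    with J_mix[OF H l c c']
    show "ereal l * ?J \<eta> c + ereal (1 - l) * ?J \<eta>' c' \<le> V T r \<rho> a f0 U1 U2 (comb l \<eta> \<eta>')"
      by (rule order_trans)
  qed
  then show ?thesis unfolding eq .
qed

lemma V_concave:
  assumes d: "\<eta> \<in> domV T r \<rho> a f0 U1 U2" "\<eta>' \<in> domV T r \<rho> a f0 U1 U2" and l: "0 \<le> l" "l \<le> 1"
  shows "ereal l * V T r \<rho> a f0 U1 U2 \<eta> + ereal (1 - l) * V T r \<rho> a f0 U1 U2 \<eta>'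
           \<le> V T r \<rho> a f0 U1 U2 (comb l \<eta> \<eta>')"
proof -
  note fin = domV_finite[OF d(1)] domV_finite[OF d(2)]
  consider "l = 0" | "l = 1" | "0 < l \<and> l < 1" using l by linarith
  then show ?thesis
  proof cases
    case 1
    then have "comb l \<eta> \<eta>' = \<eta>'" by (cases \<eta>') (simp add: comb_def)
    then show ?thesis using 1 fin by (cases "V T r \<rho> a f0 U1 U2 \<eta>") auto
  next
    case 2
    then have "comb l \<eta> \<eta>' = \<eta>" by (cases \<eta>) (simp add: comb_def)
    then show ?thesis using 2 fin by (cases "V T r \<rho> a f0 U1 U2 \<eta>'") auto
  next
    case 3
    then show ?thesis using V_concave_interior[OF d] by blast
  qed
qed

lemma domV_convex:
  assumes d: "\<eta> \<in> domV T r \<rho> a f0 U1 U2" "\<eta>' \<in> domV T r \<rho> a f0 U1 U2" and l: "0 \<le> l" "l \<le> 1"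
  shows "comb l \<eta> \<eta>' \<in> domV T r \<rho> a f0 U1 U2"
proof -
  have H: "\<eta> \<in> H_plus T" "\<eta>' \<in> H_plus T" using d by (auto simp: domV_def)
  have "-\<infinity> < ereal l * V T r \<rho> a f0 U1 U2 \<eta> + ereal (1 - l) * V T r \<rho> a f0 U1 U2 \<eta>'"
    using domV_finite(2)[OF d(1)] domV_finite(2)[OF d(2)]
    by (cases "V T r \<rho> a f0 U1 U2 \<eta>"; cases "V T r \<rho> a f0 U1 U2 \<eta>'") auto
  also have "\<dots> \<le> V T r \<rho> a f0 U1 U2 (comb l \<eta> \<eta>')" by (rule V_concave[OF d l])
  finally show ?thesis using comb_in_H_plus[OF H l] by (simp add: domV_def)
qed

end


lemma utility_mono_concave:
  fixes U :: "real \<Rightarrow> real"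
  assumes cont: "continuous_on {0..} U"
    and C2: "\<exists>U' U''. (\<forall>x>0. (U has_real_derivative U' x) (at x)
                  \<and> (U' has_real_derivative U'' x) (at x) \<and> U' x > 0 \<and> U'' x < 0)
               \<and> continuous_on {0<..} U'' \<and> filterlim U' at_top (at_right 0)"
  shows "\<And>u v. 0 \<le> u \<Longrightarrow> u \<le> v \<Longrightarrow> U u \<le> U v" and "concave_on {0..} U"
proof -
  obtain U' U'' where d: "\<forall>x>0. (U has_real_derivative U' x) (at x)
      \<and> (U' has_real_derivative U'' x) (at x) \<and> U' x > 0 \<and> U'' x < 0"
    using C2 by blast
  show mono: "U u \<le> U v" if "0 \<le> u" "u \<le> v" for u v
    using mono_on_half_line_from_deriv[OF cont _ that, of U'] d by (simp add: less_imp_le)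
  have "concave_on {0<..} U"
    by (rule f''_le0_imp_concave[where f'=U' and f''=U'']) (use d in \<open>auto intro: less_imp_le\<close>)
  then show "concave_on {0..} U" using concave_on_half_line[OF cont] mono by blast
qed

theorem proposition2p4:
  fixes T r \<rho> Cf :: real and a :: "real \<Rightarrow> real" and f0 :: "real \<Rightarrow> real \<Rightarrow> real"
    and U1 U2 :: "real \<Rightarrow> real"
  assumes T: "T > 0" and r: "r > 0" and rho: "\<rho> > 0"
    and a_W12: "W12_on T a" and a_nonneg: "\<forall>\<xi>\<in>{-T..0}. a \<xi> \<ge> 0" and a_start: "a (-T) = 0"
    and f0_concave: "concave_on ({0..} \<times> UNIV) (\<lambda>p. f0 (fst p) (snd p))"
    and f0_mono: "\<forall>x\<ge>0. \<forall>y y'. y \<le> y' \<longrightarrow> f0 x y \<le> f0 x y'"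
    and f0_lip: "Cf-lipschitz_on ({0..} \<times> UNIV) (\<lambda>p. f0 (fst p) (snd p))"
    and f0_pos: "\<forall>y>0. f0 0 y > 0"
    and f0_ext: "\<forall>x<0. \<forall>y. f0 x y = f0 0 y"
    and U1_cont: "continuous_on {0..} U1"
    and U1_C2: "\<exists>U1' U1''. (\<forall>x>0. (U1 has_real_derivative U1' x) (at x)
                  \<and> (U1' has_real_derivative U1'' x) (at x) \<and> U1' x > 0 \<and> U1'' x < 0)
               \<and> continuous_on {0<..} U1'' \<and> filterlim U1' at_top (at_right 0)"
    and U1_bdd: "bounded (U1 ` {0..})"
    and U2_cont: "continuous_on {0<..} U2"
    and U2_incr: "strict_mono_on {0<..} U2"
    and U2_concave: "concave_on {0<..} U2"
    and U2_bdd: "bdd_above (U2 ` {0<..})"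
    and U2_int: "set_integrable lborel {0..} (\<lambda>t. exp (-\<rho> * t) * U2 (exp (-Cf * t)))"
  shows "(\<forall>\<eta>\<in>domV T r \<rho> a f0 U1 U2. \<forall>\<eta>'\<in>domV T r \<rho> a f0 U1 U2. \<forall>l\<in>{0..1}.
            comb l \<eta> \<eta>' \<in> domV T r \<rho> a f0 U1 U2)
       \<and> (\<forall>\<eta>\<in>domV T r \<rho> a f0 U1 U2. \<forall>\<eta>'\<in>domV T r \<rho> a f0 U1 U2. \<forall>l\<in>{0..1}.
            V T r \<rho> a f0 U1 U2 (comb l \<eta> \<eta>')
              \<ge> ereal l * V T r \<rho> a f0 U1 U2 \<eta> + ereal (1 - l) * V T r \<rho> a f0 U1 U2 \<eta>')"
proof -
  obtain B where B: "B \<ge> 0" "\<forall>\<xi>\<in>{-T..0}. \<bar>a \<xi>\<bar> \<le> B"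
    using W12_on_measurable_bounded(2)[OF a_W12] by blast
  obtain b1 b2 where b1: "\<forall>u\<in>{0..}. \<bar>U1 u\<bar> \<le> b1" and b2: "\<forall>v\<in>{0<..}. U2 v \<le> b2"
    using U1_bdd U2_bdd unfolding bounded_iff bdd_above_def by auto
  interpret control_problem T B a r Cf f0 \<rho> "max 0 (b1 + b2)" U1 U2
  proof
    show "\<And>u v u' v'. \<bar>f0 u v - f0 u' v'\<bar> \<le> Cf * (\<bar>u - u'\<bar> + \<bar>v - v'\<bar>)"
      by (rule f0_lipschitz_global[OF f0_lip f0_ext])
    show "\<And>u v. 0 \<le> u \<Longrightarrow> 0 < v \<Longrightarrow> U1 u + U2 v \<le> max 0 (b1 + b2)"
      using b1 b2 by (smt (verit) atLeast_iff greaterThan_iff)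
  qed (use T r rho B W12_on_measurable_bounded(1)[OF a_W12] lipschitz_on_nonneg[OF f0_lip]
         f0_concave U1_cont utility_mono_concave[OF U1_cont U1_C2] U2_cont U2_concave in auto)
  show ?thesis using domV_convex V_concave by auto
qed

end
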